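(* Let $U$ be a nonempty finite set, $R\subseteq U\times U$ serial and transitive, $h$ the height function of $(Reg(U,R),\subseteq)$, and let $M(Reg(U,R))$ be the matroid on $U$ whose independent sets are $\mathbf{I}(Reg(U,R);h)$, with rank function $r$. Then for every $X\subseteq U$, $$r(X)=\min_{Y\in Reg(U,R)}\{h(Y)+|X\setminus Y|\}.$$
   Context: $R_s(x)=\{y\in U\mid xRy\}$; $\underline{R}(X)=\{x\mid R_s(x)\subseteq X\}$, $\overline{R}(X)=\{x\mid R_s(x)\cap X\neq\emptyset\}$; $X$ is regular if $X=\underline{R}(\overline{R}(X))$, and $Reg(U,R)$ is the lattice of regular sets under inclusion, with least element $\emptyset$. $h(A)$ is the length of a maximal chain in $[\emptyset,A]$. $\mathbf{I}(Reg(U,R);h)=\{X\subseteq U\mid h(Y)\ge|X\cap Y|\ \forall Y\in Reg(U,R)\}$. The rank function of a matroid is $r(X)=\max\{|I|\mid I\subseteq X,\ I\text{ independent}\}$. *)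

theory Defs
  imports Main
begin

definition serial_on :: "'a set \<Rightarrow> ('a \<times> 'a) set \<Rightarrow> bool" where
  "serial_on U R \<longleftrightarrow> (\<forall>x\<in>U. \<exists>y\<in>U. (x, y) \<in> R)"

definition succ_nbhd :: "'a set \<Rightarrow> ('a \<times> 'a) set \<Rightarrow> 'a \<Rightarrow> 'a set" where
  "succ_nbhd U R x = {y \<in> U. (x, y) \<in> R}"

definition lower_approx :: "'a set \<Rightarrow> ('a \<times> 'a) set \<Rightarrow> 'a set \<Rightarrow> 'a set" where
  "lower_approx U R X = {x \<in> U. succ_nbhd U R x \<subseteq> X}"

definition upper_approx :: "'a set \<Rightarrow> ('a \<times> 'a) set \<Rightarrow> 'a set \<Rightarrow> 'a set" where
  "upper_approx U R X = {x \<in> U. succ_nbhd U R x \<inter> X \<noteq> {}}"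

definition Reg :: "'a set \<Rightarrow> ('a \<times> 'a) set \<Rightarrow> 'a set set" where
  "Reg U R = {X. X \<subseteq> U \<and> X = lower_approx U R (upper_approx U R X)}"

definition reg_chain_below :: "'a set \<Rightarrow> ('a \<times> 'a) set \<Rightarrow> 'a set \<Rightarrow> 'a set set \<Rightarrow> bool" where
  "reg_chain_below U R A C \<longleftrightarrow> C \<subseteq> Reg U R \<and> (\<forall>Y\<in>C. Y \<subseteq> A)
     \<and> (\<forall>Y1\<in>C. \<forall>Y2\<in>C. Y1 \<subseteq> Y2 \<or> Y2 \<subseteq> Y1)"

definition reg_height :: "'a set \<Rightarrow> ('a \<times> 'a) set \<Rightarrow> 'a set \<Rightarrow> nat" where
  "reg_height U R A = Max {card C - 1 | C. reg_chain_below U R A C}"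

definition reg_indep :: "'a set \<Rightarrow> ('a \<times> 'a) set \<Rightarrow> 'a set set" where
  "reg_indep U R = {X. X \<subseteq> U \<and> (\<forall>Y\<in>Reg U R. card (X \<inter> Y) \<le> reg_height U R Y)}"

definition reg_rank :: "'a set \<Rightarrow> ('a \<times> 'a) set \<Rightarrow> 'a set \<Rightarrow> nat" where
  "reg_rank U R X = Max {card I | I. I \<subseteq> X \<and> I \<in> reg_indep U R}"

end

theory Submission
  imports Defs
begin

(* The formula r(X) = min { h(Y) + |X - Y| : Y regular } is an instance of the rank
   formula for the matroid defined by a submodular function f on an intersection-closed
   family L of subsets of a finite ground set, whose independent sets are the I with
   |I \<inter> Y| \<le> f Y for all Y \<in> L.  The inequality "max \<le> min" is immediate; for the
   converse an exchange argument, by induction on X, produces an independent I \<subseteq> X and a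
   Y \<in> L with f Y + |X - Y| \<le> |I|.
   For a serial transitive relation on a finite set, the terminal points (every successor
   of which leads back to them) fall into clusters, and the regular sets are exactly the
   sets reg_of S determined by sets S of clusters; reg_of is an order isomorphism from
   Pow clusters onto Reg U R.  Hence the height of a regular set is the number of clusters
   it meets, which is modular, so (Reg U R, h) satisfies the assumptions of
   submodular_family and the theorem follows from the abstract rank formula. *)

section \<open>The rank formula for a submodular function on a set family\<close>

definition indep_wrt :: "'a set set \<Rightarrow> ('a set \<Rightarrow> nat) \<Rightarrow> 'a set \<Rightarrow> bool" where
  "indep_wrt L f I \<longleftrightarrow> (\<forall>Y\<in>L. card (I \<inter> Y) \<le> f Y)"

lemma indep_card_le:
  assumes "indep_wrt L f I" and "I \<subseteq> X" and "finite X" and "Y \<in> L"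
  shows "card I \<le> f Y + card (X - Y)"
proof -
  have "finite I" using assms(2,3) by (rule finite_subset)
  then have "card I = card (I \<inter> Y) + card (I - Y)" by (rule card_Int_Diff)
  moreover have "card (I \<inter> Y) \<le> f Y" using assms(1,4) by (simp add: indep_wrt_def)
  moreover have "card (I - Y) \<le> card (X - Y)" using assms(2,3) by (intro card_mono) auto
  ultimately show ?thesis by linarith
qed

lemma card_Diff_Int_exchange:
  assumes "finite X"
  shows "card (X - Z) + card (X \<inter> Z \<inter> Y) = card (X - (Z \<union> Y)) + card (X \<inter> Y)"
proof -
  have "card (X - Z) = card (X \<inter> Y - Z) + card (X - (Z \<union> Y))"
    using card_Int_Diff[of "X - Z" Y] assms by (simp add: Diff_Int_distrib2 Int_Diff Diff_eq Int_ac)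
  moreover have "card (X \<inter> Y) = card (X \<inter> Z \<inter> Y) + card (X \<inter> Y - Z)"
    using card_Int_Diff[of "X \<inter> Y" Z] assms by (simp add: Int_ac)
  ultimately show ?thesis by linarith
qed

locale submodular_family =
  fixes E :: "'a set" and L :: "'a set set" and f :: "'a set \<Rightarrow> nat"
  assumes finite_ground: "finite E"
    and family_subsets: "L \<subseteq> Pow E"
    and empty_in_family: "{} \<in> L"
    and f_empty: "f {} = 0"
    and Int_in_family: "Y \<in> L \<Longrightarrow> Z \<in> L \<Longrightarrow> Y \<inter> Z \<in> L"
    and submodular: "Y \<in> L \<Longrightarrow> Z \<in> L \<Longrightarrow> \<exists>W\<in>L. Y \<union> Z \<subseteq> W \<and> f W + f (Y \<inter> Z) \<le> f Y + f Z"
begin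

lemma finite_family: "finite L"
  using finite_subset[OF family_subsets] finite_ground by simp

lemma finite_member: "Y \<in> L \<Longrightarrow> finite Y"
  using family_subsets finite_ground finite_subset by blast

lemma minimal_violated:
  assumes "\<not> indep_wrt L f X"
  obtains Y0 where "Y0 \<in> L" "f Y0 < card (X \<inter> Y0)"
    and "\<And>Y. Y \<in> L \<Longrightarrow> Y \<subset> Y0 \<Longrightarrow> card (X \<inter> Y) \<le> f Y"
proof -
  let ?V = "{Y \<in> L. f Y < card (X \<inter> Y)}"
  obtain Y where "Y \<in> ?V" using assms by (auto simp: indep_wrt_def not_le)
  then obtain Y0 where Y0: "Y0 \<in> ?V" and min: "\<And>Y. (Y, Y0) \<in> finite_psubset \<Longrightarrow> Y \<notin> ?V"
    by (rule wfE_min[OF wf_finite_psubset]) blast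
  have "card (X \<inter> Y) \<le> f Y" if "Y \<in> L" "Y \<subset> Y0" for Y
    using min[of Y] that Y0 finite_member by (auto simp: finite_psubset_def)
  with Y0 that show ?thesis by blast
qed

lemma improve_by_violated:
  assumes "Y0 \<in> L" "Z \<in> L" "finite X"
    and violated: "f Y0 < card (X \<inter> Y0)"
    and satisfied: "card (X \<inter> Z \<inter> Y0) \<le> f (Z \<inter> Y0)"
  shows "\<exists>W\<in>L. f W + card (X - W) < f Z + card (X - Z)"
proof -
  obtain W where W: "W \<in> L" "Z \<union> Y0 \<subseteq> W" "f W + f (Z \<inter> Y0) \<le> f Z + f Y0"
    using submodular[OF assms(2,1)] by blast
  have "card (X - W) \<le> card (X - (Z \<union> Y0))"
    using W(2) assms(3) by (intro card_mono) auto
  with W(3) violated satisfied card_Diff_Int_exchange[OF assms(3), of Z Y0]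
  have "f W + card (X - W) < f Z + card (X - Z)" by linarith
  with W(1) show ?thesis by blast
qed

text \<open>If \<open>X\<close> is dependent, remove a point \<open>x\<close> of a minimal violated constraint \<open>Y0\<close> and use
  the pair \<open>(I, Z)\<close> for \<open>X - {x}\<close>; if \<open>x \<notin> Z\<close>, replace \<open>Z\<close> by a cover of \<open>Z \<union> Y0\<close>.\<close>
lemma exists_tight_pair:
  assumes "finite X"
  shows "\<exists>I Y. I \<subseteq> X \<and> indep_wrt L f I \<and> Y \<in> L \<and> f Y + card (X - Y) \<le> card I"
  using assms
proof (induction X rule: finite_psubset_induct)
  case (psubset X)
  show ?case
  proof (cases "indep_wrt L f X")
    case True
    then show ?thesis using empty_in_family f_empty by (intro exI[of _ X] exI[of _ "{}"]) auto
  next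
    case False
    obtain Y0 where Y0: "Y0 \<in> L" "f Y0 < card (X \<inter> Y0)"
      and Y0_min: "\<And>Y. Y \<in> L \<Longrightarrow> Y \<subset> Y0 \<Longrightarrow> card (X \<inter> Y) \<le> f Y"
      using minimal_violated[OF False] by blast
    obtain x where x: "x \<in> X" "x \<in> Y0"
      using Y0(2) by (metis card.empty disjoint_iff not_less0)
    obtain I Z where IZ: "I \<subseteq> X - {x}" "indep_wrt L f I" "Z \<in> L"
      "f Z + card (X - {x} - Z) \<le> card I"
      using psubset.IH[of "X - {x}"] x(1) by blast
    show ?thesis
    proof (cases "x \<in> Z")
      case True
      then have "X - {x} - Z = X - Z" by blast
      with IZ show ?thesis by (metis Diff_subset order_trans)
    next
      case False
      have "card (X \<inter> (Z \<inter> Y0)) \<le> f (Z \<inter> Y0)"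
        using Y0_min[OF Int_in_family[OF IZ(3) Y0(1)]] False x(2) by blast
      then obtain W where W: "W \<in> L" "f W + card (X - W) < f Z + card (X - Z)"
        using improve_by_violated[OF Y0(1) IZ(3) psubset.hyps Y0(2)] by (auto simp: Int_assoc)
      have "x \<in> X - Z" and "X - {x} - Z = X - Z - {x}" using False x(1) by blast+
      then have "card (X - Z) = card (X - {x} - Z) + 1"
        using card.remove[of "X - Z" x] psubset.hyps by simp
      with W(2) IZ(4) have "f W + card (X - W) \<le> card I" by linarith
      with IZ(1,2) W(1) show ?thesis by blast
    qed
  qed
qed

theorem rank_formula:
  assumes "finite X"
  shows "Max {card I | I. I \<subseteq> X \<and> indep_wrt L f I} = Min {f Y + card (X - Y) | Y. Y \<in> L}"
proof -
  obtain I Y where IY: "I \<subseteq> X" "indep_wrt L f I" "Y \<in> L" "f Y + card (X - Y) \<le> card I"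
    using exists_tight_pair[OF assms] by blast
  have bound: "card I' \<le> f Y' + card (X - Y')"
    if "I' \<subseteq> X" "indep_wrt L f I'" "Y' \<in> L" for I' Y'
    using indep_card_le that assms by blast
  have tight: "card I = f Y + card (X - Y)" using bound[OF IY(1-3)] IY(4) by simp
  have "Max {card I | I. I \<subseteq> X \<and> indep_wrt L f I} = card I"
  proof (rule Max_eqI)
    show "finite {card I | I. I \<subseteq> X \<and> indep_wrt L f I}"
      by (rule finite_subset[of _ "card ` Pow X"]) (use assms in auto)
    show "card I \<in> {card I | I. I \<subseteq> X \<and> indep_wrt L f I}" using IY(1,2) by blast
  qed (use bound[of _ Y] IY(3) tight in auto)
  moreover have "Min {f Y + card (X - Y) | Y. Y \<in> L} = card I"
  proof (rule Min_eqI)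
    show "finite {f Y + card (X - Y) | Y. Y \<in> L}"
      using finite_family by (simp add: setcompr_eq_image)
    show "card I \<in> {f Y + card (X - Y) | Y. Y \<in> L}" using IY(3) tight by blast
  qed (use bound[OF IY(1,2)] in auto)
  ultimately show ?thesis by simp
qed

end

section \<open>Chains of subsets of a finite set\<close>

text \<open>A chain of subsets of \<open>S\<close> has at most \<open>|S| + 1\<close> members, since their cardinalities differ.\<close>
lemma card_subset_chain_le:
  assumes "finite S" and "\<forall>A\<in>C. A \<subseteq> S" and "\<forall>A\<in>C. \<forall>B\<in>C. A \<subseteq> B \<or> B \<subseteq> A"
  shows "card C \<le> card S + 1"
proof -
  have "inj_on card C"
  proof (rule inj_onI)
    fix A B assume A: "A \<in> C" and B: "B \<in> C" and eq: "card A = card B"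
    have "finite A" "finite B" using A B assms(1,2) finite_subset by blast+
    then show "A = B" using assms(3) A B eq card_subset_eq by metis
  qed
  moreover have "card ` C \<subseteq> {0..card S}"
    using assms(1,2) card_mono by fastforce
  ultimately have "card C \<le> card {0..card S}" by (rule card_inj_on_le) simp
  then show ?thesis by simp
qed

text \<open>The bound is attained: \<open>{} \<subset> {x1} \<subset> \<dots> \<subset> S\<close>.\<close>
lemma exists_full_subset_chain:
  assumes "finite S"
  shows "\<exists>C. (\<forall>A\<in>C. A \<subseteq> S) \<and> (\<forall>A\<in>C. \<forall>B\<in>C. A \<subseteq> B \<or> B \<subseteq> A) \<and> card C = card S + 1"
  using assms
proof (induction S rule: finite_induct)
  case empty
  show ?case by (intro exI[of _ "{{}}"]) simp
next
  case (insert x S)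
  then obtain C where C: "\<forall>A\<in>C. A \<subseteq> S" "\<forall>A\<in>C. \<forall>B\<in>C. A \<subseteq> B \<or> B \<subseteq> A"
    "card C = card S + 1"
    by blast
  have "finite C" using C(3) by (intro card_ge_0_finite) simp
  moreover have "insert x S \<notin> C" using C(1) insert.hyps(2) by blast
  ultimately have "card (insert (insert x S) C) = card (insert x S) + 1"
    using C(3) insert.hyps by simp
  moreover have "\<forall>A\<in>insert (insert x S) C. A \<subseteq> insert x S" using C(1) by blast
  moreover have "\<forall>A\<in>insert (insert x S) C. \<forall>B\<in>insert (insert x S) C. A \<subseteq> B \<or> B \<subseteq> A"
    using C(1,2) by blast
  ultimately show ?case by blast
qed

lemma chain_image_mono:
  assumes "\<forall>A\<in>C. \<forall>B\<in>C. A \<subseteq> B \<or> B \<subseteq> A" and "\<And>A B. A \<subseteq> B \<Longrightarrow> g A \<subseteq> g B"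
  shows "\<forall>A\<in>g ` C. \<forall>B\<in>g ` C. A \<subseteq> B \<or> B \<subseteq> A"
  using assms by (simp add: ball_simps) metis

section \<open>Regular sets of a finite serial transitive relation\<close>

locale finite_serial_transitive =
  fixes U :: "'a set" and R :: "('a \<times> 'a) set"
  assumes finite_universe: "finite U" and R_on_U: "R \<subseteq> U \<times> U"
    and serial: "serial_on U R" and transitive: "trans R"
begin

abbreviation nbhd :: "'a \<Rightarrow> 'a set" where
  "nbhd \<equiv> succ_nbhd U R"

definition terminal :: "'a set" where
  "terminal = {t \<in> U. \<forall>z. (t, z) \<in> R \<longrightarrow> (z, t) \<in> R}"

definition clusters :: "'a set set" where
  "clusters = nbhd ` terminal"

definition reg_of :: "'a set set \<Rightarrow> 'a set" where
  "reg_of S = {x \<in> U. \<forall>t\<in>terminal. (x, t) \<in> R \<longrightarrow> nbhd t \<in> S}"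

definition clusters_meeting :: "'a set \<Rightarrow> 'a set set" where
  "clusters_meeting Y = {c \<in> clusters. c \<inter> Y \<noteq> {}}"

lemma nbhd_eq: "nbhd x = {y. (x, y) \<in> R}"
  using R_on_U by (auto simp: succ_nbhd_def)

lemma nbhd_antimono: "(x, y) \<in> R \<Longrightarrow> nbhd y \<subseteq> nbhd x"
  using transitive by (auto simp: nbhd_eq dest: transD)

lemma finite_clusters: "finite clusters"
  using finite_universe by (simp add: clusters_def terminal_def)

lemma terminal_refl: "t \<in> terminal \<Longrightarrow> (t, t) \<in> R"
  using serial transitive unfolding terminal_def serial_on_def by (blast dest: transD)

lemma terminal_succ:
  assumes "t \<in> terminal" and "(t, s) \<in> R"
  shows "s \<in> terminal" and "nbhd s = nbhd t"
proof -
  have st: "(s, t) \<in> R" using assms by (simp add: terminal_def)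
  have "(z, s) \<in> R" if "(s, z) \<in> R" for z
  proof -
    have "(t, z) \<in> R" using assms(2) that transitive by (blast dest: transD)
    then have "(z, t) \<in> R" using assms(1) by (simp add: terminal_def)
    then show ?thesis using assms(2) transitive by (blast dest: transD)
  qed
  then show "s \<in> terminal" using assms(2) R_on_U by (auto simp: terminal_def)
  show "nbhd s = nbhd t" using nbhd_antimono[OF st] nbhd_antimono[OF assms(2)] by blast
qed

text \<open>Every point reaches a terminal point: follow successors to a neighbourhood of minimal size.\<close>
lemma exists_terminal:
  assumes "x \<in> U"
  shows "\<exists>t\<in>terminal. (x, t) \<in> R"
proof -
  have finite_nbhd: "finite (nbhd z)" for z
    using finite_universe by (simp add: succ_nbhd_def)
  obtain y0 where "(x, y0) \<in> R" using serial assms by (auto simp: serial_on_def)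
  then obtain y where y: "(x, y) \<in> R"
    and y_min: "\<And>z. (x, z) \<in> R \<Longrightarrow> card (nbhd y) \<le> card (nbhd z)"
    using ex_has_least_nat[of "\<lambda>z. (x, z) \<in> R" y0 "\<lambda>z. card (nbhd z)"] by blast
  have stable: "nbhd z = nbhd y" if yz: "(y, z) \<in> R" for z
  proof (rule card_subset_eq[OF finite_nbhd nbhd_antimono[OF yz]])
    have "(x, z) \<in> R" using y yz transitive by (blast dest: transD)
    then show "card (nbhd z) = card (nbhd y)"
      using y_min card_mono[OF finite_nbhd nbhd_antimono[OF yz]] by (simp add: le_antisym)
  qed
  obtain z where yz: "(y, z) \<in> R" using serial y R_on_U by (auto simp: serial_on_def)
  have "(w, z) \<in> R" if "(z, w) \<in> R" for w
  proof -
    have "(y, w) \<in> R" using yz that transitive by (blast dest: transD)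
    then have "z \<in> nbhd w" using stable[of w] yz by (simp add: nbhd_eq)
    then show ?thesis by (simp add: nbhd_eq)
  qed
  then have "z \<in> terminal" using yz R_on_U by (auto simp: terminal_def)
  moreover have "(x, z) \<in> R" using y yz transitive by (blast dest: transD)
  ultimately show ?thesis by blast
qed

lemma lower_upper_approx:
  "lower_approx U R (upper_approx U R Y) = reg_of (clusters_meeting Y)"
proof -
  have "(\<forall>y. (x, y) \<in> R \<longrightarrow> nbhd y \<inter> Y \<noteq> {}) \<longleftrightarrow>
        (\<forall>t\<in>terminal. (x, t) \<in> R \<longrightarrow> nbhd t \<inter> Y \<noteq> {})" for x
  proof
    assume "\<forall>t\<in>terminal. (x, t) \<in> R \<longrightarrow> nbhd t \<inter> Y \<noteq> {}"
    moreover have "\<exists>t\<in>terminal. (x, t) \<in> R \<and> nbhd t \<subseteq> nbhd y" if "(x, y) \<in> R" for y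
      using exists_terminal[of y] that R_on_U transitive nbhd_antimono by (blast dest: transD)
    ultimately show "\<forall>y. (x, y) \<in> R \<longrightarrow> nbhd y \<inter> Y \<noteq> {}" by blast
  qed (simp add: terminal_def)
  then show ?thesis
    using R_on_U
    by (auto simp: lower_approx_def upper_approx_def reg_of_def clusters_meeting_def
        clusters_def nbhd_eq)
qed

lemma clusters_meeting_reg_of: "clusters_meeting (reg_of S) = S \<inter> clusters"
proof (rule set_eqI)
  fix c
  show "c \<in> clusters_meeting (reg_of S) \<longleftrightarrow> c \<in> S \<inter> clusters"
  proof (cases "c \<in> clusters")
    case True
    then obtain t where t: "t \<in> terminal" "c = nbhd t" by (auto simp: clusters_def)
    have "c \<inter> reg_of S \<noteq> {} \<longleftrightarrow> nbhd t \<in> S"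
    proof
      assume "c \<inter> reg_of S \<noteq> {}"
      then obtain s where s: "(t, s) \<in> R" "s \<in> reg_of S" using t(2) by (auto simp: nbhd_eq)
      then show "nbhd t \<in> S"
        using terminal_succ[OF t(1) s(1)] terminal_refl by (auto simp: reg_of_def)
    next
      assume "nbhd t \<in> S"
      then have "t \<in> reg_of S"
        using t(1) terminal_succ(2)[OF t(1)] by (auto simp: reg_of_def terminal_def)
      then show "c \<inter> reg_of S \<noteq> {}" using t terminal_refl by (auto simp: nbhd_eq)
    qed
    then show ?thesis using True t(2) by (simp add: clusters_meeting_def)
  qed (simp add: clusters_meeting_def)
qed

lemma reg_of_mono: "S \<subseteq> T \<Longrightarrow> reg_of S \<subseteq> reg_of T"
  by (auto simp: reg_of_def)

lemma reg_of_Int: "reg_of (S \<inter> T) = reg_of S \<inter> reg_of T"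
  by (auto simp: reg_of_def)

lemma reg_of_empty: "reg_of {} = {}"
  using exists_terminal by (auto simp: reg_of_def)

lemma clusters_meeting_mono: "Y \<subseteq> Z \<Longrightarrow> clusters_meeting Y \<subseteq> clusters_meeting Z"
  by (auto simp: clusters_meeting_def)

lemma reg_of_Reg: "reg_of S \<in> Reg U R"
proof -
  have "reg_of (S \<inter> clusters) = reg_of S" by (auto simp: reg_of_def clusters_def)
  then show ?thesis
    by (auto simp: Reg_def lower_upper_approx clusters_meeting_reg_of) (simp add: reg_of_def)
qed

text \<open>Every regular set is determined by the clusters it meets, so
  \<open>reg_of\<close> maps \<open>Pow clusters\<close> bijectively onto \<open>Reg U R\<close>.\<close>
lemma reg_of_clusters_meeting: "Y \<in> Reg U R \<Longrightarrow> reg_of (clusters_meeting Y) = Y"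
  by (simp add: Reg_def lower_upper_approx)

lemma clusters_meeting_reg_of_subset: "S \<subseteq> clusters \<Longrightarrow> clusters_meeting (reg_of S) = S"
  by (auto simp: clusters_meeting_reg_of)

lemma clusters_meeting_subset: "clusters_meeting Y \<subseteq> clusters"
  by (auto simp: clusters_meeting_def)

text \<open>The height of a regular set is the number of clusters it meets: chains of regular sets
  below \<open>Y\<close> correspond to chains of subsets of \<open>clusters_meeting Y\<close>.\<close>
lemma reg_height_eq:
  assumes "Y \<in> Reg U R"
  shows "reg_height U R Y = card (clusters_meeting Y)"
proof -
  let ?S = "clusters_meeting Y"
  let ?H = "{card C - 1 | C. reg_chain_below U R Y C}"
  have fin: "finite ?S" using finite_clusters clusters_meeting_subset by (rule finite_subset[rotated])
  have Y: "reg_of ?S = Y" using assms by (rule reg_of_clusters_meeting)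
  have bound: "card C - 1 \<le> card ?S" if "reg_chain_below U R Y C" for C
  proof -
    have C: "C \<subseteq> Reg U R" "\<forall>Z\<in>C. Z \<subseteq> Y" "\<forall>Z1\<in>C. \<forall>Z2\<in>C. Z1 \<subseteq> Z2 \<or> Z2 \<subseteq> Z1"
      using that by (auto simp: reg_chain_below_def)
    have "inj_on clusters_meeting C"
      by (rule inj_on_inverseI[where g = reg_of], rule reg_of_clusters_meeting) (use C(1) in blast)
    then have "card C = card (clusters_meeting ` C)" by (simp add: card_image)
    also have "\<dots> \<le> card ?S + 1"
    proof (rule card_subset_chain_le[OF fin])
      show "\<forall>A\<in>clusters_meeting ` C. A \<subseteq> ?S" using C(2) by (simp add: clusters_meeting_mono)
      show "\<forall>A\<in>clusters_meeting ` C. \<forall>B\<in>clusters_meeting ` C. A \<subseteq> B \<or> B \<subseteq> A"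
        using C(3) clusters_meeting_mono by (rule chain_image_mono)
    qed
    finally show ?thesis by simp
  qed
  obtain C where C: "\<forall>A\<in>C. A \<subseteq> ?S" "\<forall>A\<in>C. \<forall>B\<in>C. A \<subseteq> B \<or> B \<subseteq> A" "card C = card ?S + 1"
    using exists_full_subset_chain[OF fin] by (elim exE conjE)
  have "reg_chain_below U R Y (reg_of ` C)"
    unfolding reg_chain_below_def
  proof (intro conjI)
    show "reg_of ` C \<subseteq> Reg U R" using reg_of_Reg by blast
    have "reg_of T \<subseteq> Y" if "T \<subseteq> ?S" for T using reg_of_mono[OF that] by (simp add: Y)
    then show "\<forall>A\<in>reg_of ` C. A \<subseteq> Y" using C(1) by blast
    show "\<forall>A\<in>reg_of ` C. \<forall>B\<in>reg_of ` C. A \<subseteq> B \<or> B \<subseteq> A"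
      using C(2) reg_of_mono by (rule chain_image_mono)
  qed
  moreover have "inj_on reg_of C"
    by (rule inj_on_inverseI[where g = clusters_meeting], rule clusters_meeting_reg_of_subset)
      (use C(1) clusters_meeting_subset in blast)
  then have "card ?S = card (reg_of ` C) - 1" using C(3) by (simp add: card_image)
  ultimately have attained: "card ?S \<in> ?H" by (intro CollectI exI conjI)
  have le: "m \<le> card ?S" if "m \<in> ?H" for m using that bound by (elim CollectE exE conjE) simp
  have "finite ?H" by (rule finite_subset[of _ "{..card ?S}"]) (use le in auto)
  then show ?thesis unfolding reg_height_def using le attained by (rule Max_eqI)
qed

text \<open>The height is modular: \<open>reg_of\<close> turns union and intersection of cluster sets into the
  join and meet of regular sets.\<close>
lemma reg_height_modular:
  assumes "Y \<in> Reg U R" and "Z \<in> Reg U R"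
  shows "Y \<inter> Z \<in> Reg U R"
    and "\<exists>W\<in>Reg U R. Y \<union> Z \<subseteq> W \<and>
           reg_height U R W + reg_height U R (Y \<inter> Z) = reg_height U R Y + reg_height U R Z"
proof -
  define S T where "S = clusters_meeting Y" and "T = clusters_meeting Z"
  have Y: "reg_of S = Y" and Z: "reg_of T = Z"
    unfolding S_def T_def using assms by (simp_all add: reg_of_clusters_meeting)
  have S_sub: "S \<subseteq> clusters" and T_sub: "T \<subseteq> clusters"
    unfolding S_def T_def by (rule clusters_meeting_subset)+
  have YZ: "Y \<inter> Z = reg_of (S \<inter> T)" by (simp add: reg_of_Int Y Z)
  then show YZ_Reg: "Y \<inter> Z \<in> Reg U R" by (simp only: reg_of_Reg)
  have fin: "finite S" "finite T"
    using S_sub T_sub finite_clusters by (auto intro: finite_subset)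
  let ?W = "reg_of (S \<union> T)"
  have W_Reg: "?W \<in> Reg U R" by (rule reg_of_Reg)
  have "Y \<union> Z \<subseteq> ?W" unfolding Y[symmetric] Z[symmetric] by (intro Un_least reg_of_mono) auto
  moreover have "reg_height U R ?W = card (S \<union> T)"
    using reg_height_eq[OF W_Reg] clusters_meeting_reg_of_subset[OF Un_least[OF S_sub T_sub]]
    by simp
  moreover have "reg_height U R (Y \<inter> Z) = card (S \<inter> T)"
    using reg_height_eq[OF YZ_Reg] clusters_meeting_reg_of_subset[OF le_infI1[OF S_sub]]
    unfolding YZ by simp
  moreover have "reg_height U R Y = card S" "reg_height U R Z = card T"
    unfolding S_def T_def using assms by (simp_all add: reg_height_eq)
  ultimately show "\<exists>W\<in>Reg U R. Y \<union> Z \<subseteq> W \<and>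
           reg_height U R W + reg_height U R (Y \<inter> Z) = reg_height U R Y + reg_height U R Z"
    using W_Reg card_Un_Int[OF fin] by auto
qed

lemma Reg_submodular_family: "submodular_family U (Reg U R) (reg_height U R)"
proof
  show "finite U" by (rule finite_universe)
  show "Reg U R \<subseteq> Pow U" by (auto simp: Reg_def)
  show empty: "{} \<in> Reg U R" using reg_of_Reg[of "{}"] by (simp only: reg_of_empty)
  show "reg_height U R {} = 0" by (simp add: reg_height_eq[OF empty] clusters_meeting_def)
  show "Y \<inter> Z \<in> Reg U R" if "Y \<in> Reg U R" "Z \<in> Reg U R" for Y Z
    using that by (rule reg_height_modular(1))
  show "\<exists>W\<in>Reg U R. Y \<union> Z \<subseteq> W \<and>
          reg_height U R W + reg_height U R (Y \<inter> Z) \<le> reg_height U R Y + reg_height U R Z"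
    if "Y \<in> Reg U R" "Z \<in> Reg U R" for Y Z
    using reg_height_modular(2)[OF that] by (auto intro: eq_imp_le)
qed

end

theorem proposition3:
  fixes U :: "'a set" and R :: "('a \<times> 'a) set" and X :: "'a set"
  assumes "finite U" and "U \<noteq> {}" and "R \<subseteq> U \<times> U"
    and "serial_on U R" and "trans R"
    and "X \<subseteq> U"
  shows "reg_rank U R X = Min {reg_height U R Y + card (X - Y) | Y. Y \<in> Reg U R}"
proof -
  interpret finite_serial_transitive U R
    using assms by unfold_locales
  interpret submodular_family U "Reg U R" "reg_height U R"
    by (rule Reg_submodular_family)
  have indep_iff: "I \<subseteq> X \<and> I \<in> reg_indep U R \<longleftrightarrow> I \<subseteq> X \<and> indep_wrt (Reg U R) (reg_height U R) I" for I
    using assms(6) by (auto simp: reg_indep_def indep_wrt_def)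
  have "reg_rank U R X = Max {card I | I. I \<subseteq> X \<and> indep_wrt (Reg U R) (reg_height U R) I}"
    unfolding reg_rank_def by (simp only: indep_iff)
  also have "\<dots> = Min {reg_height U R Y + card (X - Y) | Y. Y \<in> Reg U R}"
    using assms(1,6) by (intro rank_formula) (rule finite_subset)
  finally show ?thesis .
qed

end
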